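(* Let $\mathfrak g=\mathfrak v\oplus\mathfrak z$ be a two-step nilpotent Lie algebra with inner product, $B\in\mathbb R$, $\zeta_m\in\mathfrak z^*$, and $h(p)=\tfrac12|p+B\zeta_m|^2$ on $\mathfrak g^*$. Every integral curve of the Euler vector field $E_h$ has the form $p(t)=p_{\mathfrak v}(t)+\zeta_0$, where $\zeta_0\in\mathfrak z^*$ is constant and $p_{\mathfrak v}(t)\in\mathfrak v^*$ satisfies $p_{\mathfrak v}'(t)=\mathcal A(p_{\mathfrak v}(t))$ for some linear transformation $\mathcal A$ of $\mathfrak v^*$ that is skew-symmetric with respect to the restricted inner product.
   Context: $\mathfrak g$ is two-step nilpotent (nonabelian, all brackets central) with center $\mathfrak z$ and $\mathfrak v=\mathfrak z^\perp$; $\mathfrak v^*$ (resp. $\mathfrak z^*$) are functionals vanishing on $\mathfrak z$ (resp. $\mathfrak v$); $\mathfrak g^*$ has the dual inner product, $\sharp:\mathfrak g^*\to\mathfrak g$ the associated isomorphism, $|p|^2=\langle p,\sharp p\rangle$. The Poisson bracket on $\mathfrak g^*$ is $\{f,k\}(p)=-\langle p,[df_p,dk_p]\rangle$, and the Euler vector field of $h$ is $E_h(f)=\{f,h\}$, i.e. $E_h(p)=-\mathrm{ad}^*_{dh_p}p$ with $\langle\mathrm{ad}^*_Xp,Y\rangle=-\langle p,[X,Y]\rangle$. *)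

theory Defs
  imports "HOL-Analysis.Analysis"
begin

text \<open>The dual g* is identified with g via the
musical isomorphism (sharp), so a covector p is represented by the vector sharp p, and
the pairing p(X) is p \<bullet> X.\<close>

definition two_step_nilpotent :: "('a::euclidean_space \<Rightarrow> 'a \<Rightarrow> 'a) \<Rightarrow> bool" where
  "two_step_nilpotent brk \<longleftrightarrow>
     bilinear brk \<and> (\<forall>x y. brk x y = - brk y x) \<and>
     (\<forall>x y w. brk (brk x y) w = 0) \<and> (\<exists>x y. brk x y \<noteq> 0)"

definition lie_center :: "('a::euclidean_space \<Rightarrow> 'a \<Rightarrow> 'a) \<Rightarrow> 'a set" where
  "lie_center brk = {x. \<forall>y. brk x y = 0}"

definition vpart :: "('a::euclidean_space \<Rightarrow> 'a \<Rightarrow> 'a) \<Rightarrow> 'a set" where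
  "vpart brk = {x. \<forall>z\<in>lie_center brk. x \<bullet> z = 0}"

text \<open>Differential dh_p of h at p, as an element of (g*)* = g.\<close>
definition dfun :: "('a::euclidean_space \<Rightarrow> real) \<Rightarrow> 'a \<Rightarrow> 'a" where
  "dfun h p = (THE X. (h has_derivative (\<lambda>q. X \<bullet> q)) (at p))"

text \<open>Euler vector field E_h(p) = - ad*_{dh_p} p, i.e. (E_h p)(Y) = p([dh_p, Y]).\<close>
definition euler_field :: "('a::euclidean_space \<Rightarrow> 'a \<Rightarrow> 'a) \<Rightarrow> ('a \<Rightarrow> real) \<Rightarrow> 'a \<Rightarrow> 'a" where
  "euler_field brk h p = (THE e. \<forall>Y. e \<bullet> Y = p \<bullet> brk (dfun h p) Y)"

end

theory Submission
  imports Defs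
begin

text \<open>Since dh_p = p + B\<zeta>m and \<zeta>m is central, E_h(p) pairs with Y as p([p, Y]).  Brackets are
central, so E_h(p) annihilates the centre: the central component \<zeta>0 of p is constant.  Writing
p = p_v + \<zeta>0 and using that p_v is orthogonal to the centre, p([p, Y]) = \<zeta>0([p_v, Y]), i.e.
E_h(p) = -ad*_{p_v} \<zeta>0, and X \<mapsto> -ad*_X \<zeta>0 is skew-symmetric because the bracket is.\<close>

lemma two_step_nilpotentD:
  assumes "two_step_nilpotent brk"
  shows two_step_nilpotent_bilinear: "bilinear brk"
    and two_step_nilpotent_skew: "brk x y = - brk y x"
    and two_step_nilpotent_bracket_central: "brk x y \<in> lie_center brk"
  using assms unfolding two_step_nilpotent_def lie_center_def by blast+

lemma bracket_lie_center_right: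
  assumes "\<And>x y. brk x y = - brk y x" and "z \<in> lie_center brk"
  shows "brk x z = 0"
  using assms(1)[of x z] assms(2) by (simp add: lie_center_def)

lemma subspace_lie_center:
  assumes "bilinear brk"
  shows "subspace (lie_center brk)"
  unfolding subspace_def lie_center_def
  by (auto simp: bilinear_lzero[OF assms] bilinear_ladd[OF assms] bilinear_lmul[OF assms])

lemma subspace_vpart: "subspace (vpart brk)"
  using subspace_orthogonal_to_vectors[of "lie_center brk"]
  by (simp add: vpart_def orthogonal_def inner_commute)

lemma lie_center_vpart_decomp:
  assumes "bilinear brk"
  obtains \<zeta> where "\<zeta> \<in> lie_center brk" and "q - \<zeta> \<in> vpart brk"
proof -
  have span_center: "span (lie_center brk) = lie_center brk"
    using subspace_lie_center[OF assms] by (rule span_eq_iff[THEN iffD2])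
  obtain y z where "y \<in> lie_center brk" "q = y + z"
    and "\<And>w. w \<in> lie_center brk \<Longrightarrow> orthogonal z w"
    by (rule orthogonal_subspace_decomp_exists[of "lie_center brk" q, unfolded span_center]) blast
  then show thesis
    by (intro that[of y]) (auto simp: vpart_def orthogonal_def)
qed

lemma inner_the_representer:
  fixes L :: "'a::euclidean_space \<Rightarrow> real"
  assumes "linear L"
  shows "(THE e. \<forall>Y. e \<bullet> Y = L Y) \<bullet> Y = L Y"
proof -
  have rep: "\<forall>Y. adjoint L 1 \<bullet> Y = L Y"
    using adjoint_works[OF assms, where y=1] by (simp add: inner_commute)
  have "\<forall>Y. (THE e. \<forall>Y. e \<bullet> Y = L Y) \<bullet> Y = L Y"
    by (rule theI[of _ "adjoint L 1"], rule rep) (metis rep vector_eq_rdot)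
  then show ?thesis by blast
qed

lemma linear_inner_bracket:
  assumes "bilinear brk"
  shows "linear (\<lambda>Y. q \<bullet> brk X Y)"
proof -
  have "linear (brk X)" using assms by (simp add: bilinear_def)
  then show ?thesis
    using linear_compose[OF _ bounded_linear.linear[OF bounded_linear_inner_right]]
    by (simp add: o_def)
qed

definition coad :: "('a::euclidean_space \<Rightarrow> 'a \<Rightarrow> 'a) \<Rightarrow> 'a \<Rightarrow> 'a \<Rightarrow> 'a" where
  "coad brk X p = (THE e. \<forall>Y. e \<bullet> Y = - (p \<bullet> brk X Y))"

lemma inner_coad:
  assumes "bilinear brk"
  shows "coad brk X p \<bullet> Y = - (p \<bullet> brk X Y)"
  unfolding coad_def
  by (rule inner_the_representer[OF linear_compose_neg[OF linear_inner_bracket[OF assms]]])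

lemma inner_euler_field:
  assumes "bilinear brk"
  shows "euler_field brk h p \<bullet> Y = p \<bullet> brk (dfun h p) Y"
  unfolding euler_field_def by (rule inner_the_representer[OF linear_inner_bracket[OF assms]])

lemma euler_field_eq_neg_coad:
  assumes "bilinear brk"
  shows "euler_field brk h p = - coad brk (dfun h p) p"
  by (rule vector_eq_rdot[THEN iffD1]) (simp add: inner_euler_field inner_coad assms)

lemma linear_coad:
  assumes "bilinear brk"
  shows "linear (\<lambda>X. coad brk X p)"
proof (rule linearI)
  fix X X' show "coad brk (X + X') p = coad brk X p + coad brk X' p"
    by (rule vector_eq_rdot[THEN iffD1])
       (simp add: inner_coad assms inner_add_left bilinear_ladd[OF assms] inner_add_right)
next
  fix r X show "coad brk (r *\<^sub>R X) p = r *\<^sub>R coad brk X p"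
    by (rule vector_eq_rdot[THEN iffD1]) (simp add: inner_coad assms bilinear_lmul[OF assms])
qed

lemma coad_skew:
  assumes "bilinear brk" and "\<And>x y. brk x y = - brk y x"
  shows "coad brk X p \<bullet> Y = - (X \<bullet> coad brk Y p)"
  using assms(2)[of X Y] by (simp add: inner_coad[OF assms(1)] inner_commute[of X])

lemma coad_in_vpart:
  assumes "bilinear brk" and "\<And>x y. brk x y = - brk y x"
  shows "coad brk X p \<in> vpart brk"
proof -
  have "p \<bullet> brk X z = 0" if "z \<in> lie_center brk" for z
    using bracket_lie_center_right[OF assms(2) that] by simp
  then show ?thesis by (simp add: vpart_def inner_coad[OF assms(1)])
qed

lemma dfun_half_norm_sq:
  fixes c :: "'a::euclidean_space"
  shows "dfun (\<lambda>q. (1/2) * (norm (q + c))\<^sup>2) p = p + c"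
proof -
  have deriv: "((\<lambda>q. (1/2) * (norm (q + c))\<^sup>2) has_derivative (\<lambda>h. (p + c) \<bullet> h)) (at p)"
  proof -
    have "((\<lambda>q. (1/2) * ((q + c) \<bullet> (q + c))) has_derivative
           (\<lambda>h. (1/2) * (h \<bullet> (p + c) + (p + c) \<bullet> h))) (at p)"
      by (auto intro!: derivative_eq_intros)
    then show ?thesis by (simp add: power2_norm_eq_inner inner_commute[of _ "p + c"])
  qed
  show ?thesis unfolding dfun_def
  proof (rule the_equality)
    fix X assume "((\<lambda>q. (1/2) * (norm (q + c))\<^sup>2) has_derivative (\<lambda>q. X \<bullet> q)) (at p)"
    then have "(\<lambda>q. X \<bullet> q) = (\<lambda>h. (p + c) \<bullet> h)" using deriv by (rule has_derivative_unique)
    then show "X = p + c" by (metis vector_eq_rdot)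
  qed (rule deriv)
qed

lemma euler_field_half_norm_sq:
  assumes "two_step_nilpotent brk" and "c \<in> lie_center brk"
    and "v \<in> vpart brk" and "\<zeta> \<in> lie_center brk"
  shows "euler_field brk (\<lambda>q. (1/2) * (norm (q + c))\<^sup>2) (v + \<zeta>) = - coad brk v \<zeta>"
proof -
  note bil = two_step_nilpotent_bilinear[OF assms(1)]
  have key: "(v + \<zeta>) \<bullet> brk (v + \<zeta> + c) Y = \<zeta> \<bullet> brk v Y" for Y
  proof -
    have "brk (v + \<zeta> + c) Y = brk v Y"
      using assms(2,4) by (simp add: lie_center_def bilinear_ladd[OF bil])
    moreover have "v \<bullet> brk v Y = 0"
      using assms(3) two_step_nilpotent_bracket_central[OF assms(1)] by (simp add: vpart_def)
    ultimately show ?thesis by (simp add: inner_add_left)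
  qed
  have "coad brk (v + \<zeta> + c) (v + \<zeta>) = coad brk v \<zeta>"
    by (rule vector_eq_rdot[THEN iffD1]) (simp add: inner_coad[OF bil] key)
  then show ?thesis
    unfolding euler_field_eq_neg_coad[OF bil] dfun_half_norm_sq by simp
qed

lemma euler_field_half_norm_sq_orthogonal_center:
  assumes "two_step_nilpotent brk" and "w \<in> lie_center brk"
  shows "euler_field brk (\<lambda>q. (1/2) * (norm (q + c))\<^sup>2) q \<bullet> w = 0"
  using bracket_lie_center_right[OF two_step_nilpotent_skew[OF assms(1)] assms(2)]
  by (simp add: inner_euler_field[OF two_step_nilpotent_bilinear[OF assms(1)]])

lemma inner_constant_on_interval:
  fixes p :: "real \<Rightarrow> 'a::real_inner"
  assumes "is_interval I"
    and "\<And>t. t \<in> I \<Longrightarrow> (p has_vector_derivative p' t) (at t)"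
    and "\<And>t. t \<in> I \<Longrightarrow> p' t \<bullet> w = 0"
    and "t \<in> I" and "s \<in> I"
  shows "p t \<bullet> w = p s \<bullet> w"
proof -
  have "((\<lambda>t. p t \<bullet> w) has_field_derivative 0) (at t within I)" if "t \<in> I" for t
  proof -
    have "((\<lambda>t. p t \<bullet> w) has_field_derivative p' t \<bullet> w) (at t)"
      using assms(2)[OF that] unfolding has_vector_derivative_def has_field_derivative_def
      by (auto intro!: derivative_eq_intros simp: inner_scaleR_left)
    then show ?thesis using assms(3)[OF that] by (simp add: has_field_derivative_at_within)
  qed
  then obtain k where "\<forall>t\<in>I. p t \<bullet> w = k"
    using has_field_derivative_zero_constant[OF is_interval_convex[OF assms(1)]] by blast
  with assms(4,5) show ?thesis by simp
qed

theorem lemma2p5: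
  fixes brk :: "'a::euclidean_space \<Rightarrow> 'a \<Rightarrow> 'a"
    and B :: real and \<zeta>m :: 'a and p :: "real \<Rightarrow> 'a" and I :: "real set"
  assumes "two_step_nilpotent brk"
    and "\<zeta>m \<in> lie_center brk"
    and "open I" and "is_interval I"
    and "\<And>t. t \<in> I \<Longrightarrow>
           (p has_vector_derivative
              euler_field brk (\<lambda>q. (1/2) * (norm (q + B *\<^sub>R \<zeta>m))\<^sup>2) (p t)) (at t)"
  shows "\<exists>\<zeta>0 pv A. \<zeta>0 \<in> lie_center brk \<and> linear A \<and> A ` vpart brk \<subseteq> vpart brk \<and>
           (\<forall>x\<in>vpart brk. \<forall>y\<in>vpart brk. A x \<bullet> y = - (x \<bullet> A y)) \<and>
           (\<forall>t\<in>I. pv t \<in> vpart brk \<and> p t = pv t + \<zeta>0 \<and>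
                   (pv has_vector_derivative A (pv t)) (at t))"
proof -
  note bil = two_step_nilpotent_bilinear[OF assms(1)]
    and skew = two_step_nilpotent_skew[OF assms(1)]
  \<comment> \<open>I may be empty; t0 \<in> I is only used once some t \<in> I is at hand.\<close>
  define t0 where "t0 = (SOME t. t \<in> I)"
  obtain \<zeta>0 where \<zeta>0: "\<zeta>0 \<in> lie_center brk" and "p t0 - \<zeta>0 \<in> vpart brk"
    using lie_center_vpart_decomp[OF bil] by blast
  have pv: "p t - \<zeta>0 \<in> vpart brk" if t: "t \<in> I" for t
  proof -
    have "t0 \<in> I" unfolding t0_def using t by (rule someI)
    then have "p t - p t0 \<in> vpart brk"
      using inner_constant_on_interval[OF assms(4,5) _ t]
        euler_field_half_norm_sq_orthogonal_center[OF assms(1)]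
      by (simp add: vpart_def inner_diff_left)
    moreover have "p t - \<zeta>0 = (p t - p t0) + (p t0 - \<zeta>0)" by simp
    ultimately show ?thesis
      using subspace_add[OF subspace_vpart _ \<open>p t0 - \<zeta>0 \<in> vpart brk\<close>] by metis
  qed
  have "(p has_vector_derivative - coad brk (p t - \<zeta>0) \<zeta>0) (at t)" if "t \<in> I" for t
    using assms(5)[OF that]
      euler_field_half_norm_sq[OF assms(1) _ pv[OF that] \<zeta>0, of "B *\<^sub>R \<zeta>m"] assms(2)
    by (simp add: subspace_lie_center[OF bil] subspace_scale)
  then have "((\<lambda>t. p t - \<zeta>0) has_vector_derivative - coad brk (p t - \<zeta>0) \<zeta>0) (at t)"
    if "t \<in> I" for t
    using that by (auto intro!: derivative_eq_intros)
  then show ?thesis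
    using \<zeta>0 pv linear_compose_neg[OF linear_coad[OF bil]]
      subspace_neg[OF subspace_vpart coad_in_vpart[OF bil skew]] coad_skew[OF bil skew]
    by (intro exI[of _ \<zeta>0] exI[of _ "\<lambda>t. p t - \<zeta>0"] exI[of _ "\<lambda>X. - coad brk X \<zeta>0"]) auto
qed

end
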